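(* Let $\kappa$ be a regular uncountable cardinal with $\kappa^{<\kappa}=\kappa$ and $\gamma^\omega<\kappa$ for all $\gamma<\kappa$, and let $I$ and $I_\alpha$ be as in the context. For every limit ordinal $\delta<\kappa$ and every $\nu\in I$ there is $\beta<\delta$ such that for every $\sigma\in I_\delta$ with $\sigma>\nu$ there is $\sigma'\in I_\beta$ with $\sigma\ge\sigma'\ge\nu$.
   Context: $I^0$: order $\kappa\times\mathbb Q$ lexicographically; $I^0$ is the set of $f:\omega\to\kappa\times\mathbb Q$, $f(n)=(f_1(n),f_2(n))$, with $\{n\mid f_1(n)\ne0\}$ finite, ordered by comparing at the least $n$ where they differ. Construct linear orders $I^0\subseteq I^1\subseteq\dots$ ($i<\kappa$): given $I^i$, for each $\nu\in I^i$ add a new element $\nu^{i+1}$ with $\nu^{i+1}<\nu$ and, for every $\tau\in I^i\setminus\{\nu\}$, $\tau<\nu^{i+1}$ iff $\tau<\nu$ (for distinct $\nu,\mu$, $\nu^{i+1}<\mu^{i+1}$ iff $\nu<\mu$); $I^{i+1}=I^i\cup\{\nu^{i+1}\mid\nu\in I^i\}$; at limits take unions; $I=\bigcup_{i<\kappa}I^i$. Representations: $I^0_\alpha=\{\nu\in I^0\mid\nu_1(n)<\alpha\ \forall n\}$; $I^{i+1}_\alpha=I^i_\alpha\cup\{\nu^{i+1}\mid\nu\in I^i_\alpha\}$; for limit $i$, $I^i_\alpha=\bigcup_{j<i}I^j_\alpha$; finally $I_\alpha=I^\alpha_\alpha$. *)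

theory Defs
  imports Main "HOL.Rat"
begin

text \<open>The cardinal kappa is represented by a wellordered type 'k whose order type is
  the initial ordinal kappa (card_order of its order relation); elements of 'k are
  the ordinals below kappa.\<close>

definition kord :: "('k::wellorder \<times> 'k) set" where
  "kord = {(x, y). x \<le> y}"

definition kzero :: "'k::wellorder" where
  "kzero = (LEAST x. True)"

definition is_limit :: "'k::wellorder \<Rightarrow> bool" where
  "is_limit d \<longleftrightarrow> d \<noteq> kzero \<and> (\<forall>b. b < d \<longrightarrow> (\<exists>c. b < c \<and> c < d))"

definition pair_less :: "'k::wellorder \<times> rat \<Rightarrow> 'k \<times> rat \<Rightarrow> bool" where
  "pair_less x y \<longleftrightarrow> fst x < fst y \<or> (fst x = fst y \<and> snd x < snd y)"

definition I0 :: "(nat \<Rightarrow> 'k::wellorder \<times> rat) set" where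
  "I0 = {f. finite {n. fst (f n) \<noteq> kzero}}"

definition lex0_less :: "(nat \<Rightarrow> 'k::wellorder \<times> rat) \<Rightarrow> (nat \<Rightarrow> 'k \<times> rat) \<Rightarrow> bool" where
  "lex0_less f g \<longleftrightarrow> (\<exists>n. (\<forall>m<n. f m = g m) \<and> pair_less (f n) (g n))"

text \<open>Elements of I: a pair (f, [a1,...,ak]) with f in I^0 and a1 < ... < ak in kappa
  stands for the element f^{a1+1 ... ak+1}, i.e. the new element nu^{ak+1} added at stage
  ak+1 for nu = (f,[a1,...,a(k-1)]) (which lies in I^{ak} since a(k-1) < ak).\<close>
type_synonym 'k elt = "(nat \<Rightarrow> 'k \<times> rat) \<times> 'k list"

definition Iset :: "'k::wellorder elt set" where
  "Iset = {(f, A). f \<in> I0 \<and> sorted_wrt (<) A}"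

text \<open>The order on I, exactly following the construction: nu^{i+1} < nu, for tau in
  I^i - {nu}: tau < nu^{i+1} iff tau < nu, and nu^{i+1} < mu^{i+1} iff nu < mu.\<close>
function Iless :: "'k::wellorder elt \<Rightarrow> 'k elt \<Rightarrow> bool" where
  "Iless (f, A) (g, B) =
    (if A = [] \<and> B = [] then lex0_less f g
     else if B = [] \<or> (A \<noteq> [] \<and> last B < last A)
       then ((f, butlast A) = (g, B) \<or> Iless (f, butlast A) (g, B))
     else if A = [] \<or> last A < last B
       then ((f, A) \<noteq> (g, butlast B) \<and> Iless (f, A) (g, butlast B))
     else Iless (f, butlast A) (g, butlast B))"
  by pat_completeness auto
termination
proof (relation "measure (\<lambda>((f, A), (g, B)). length A + length B)", goal_cases)
  case 1 show ?case by auto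
next
  case (2 f A g B) then show ?case by (cases A) auto
next
  case (3 f A g B) then show ?case by (cases B) auto
next
  case (4 f A g B) then show ?case by (cases A; cases B) auto
qed

text \<open>I^i (i < kappa): elements created at stage at most i.\<close>
definition Istage :: "'k::wellorder \<Rightarrow> 'k elt set" where
  "Istage i = {(f, A) \<in> Iset. \<forall>a \<in> set A. a < i}"

definition Ialpha :: "'k::wellorder \<Rightarrow> 'k elt set" where
  "Ialpha \<alpha> = {(f, A) \<in> Iset. (\<forall>n. fst (f n) < \<alpha>) \<and> (\<forall>a \<in> set A. a < \<alpha>)}"

end

theory Submission
  imports Defs
begin

(* Only finitely many ordinals occur in nu (the kappa-coordinates of its root in I^0 and its
   stages), so below the limit delta they are all bounded by some beta < delta.  Elements of I
   are compared first by their roots in I^0 and, for equal roots, lexicographically by their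
   sets of stages.  Given sigma in I_delta above nu: if the roots differ, moving one rational
   coordinate of nu's root yields a root strictly between them that uses only ordinals of nu;
   if the roots agree, cutting nu's stage set just after the first stage where it differs from
   sigma's (or taking sigma itself, when that stage is not below delta) gives an element of
   I_beta between nu and sigma. *)

declare Iless.simps [simp del]

definition set_lex_less :: "'a::linorder set \<Rightarrow> 'a set \<Rightarrow> bool" where
  "set_lex_less X Y \<longleftrightarrow> (\<exists>d. d \<in> X \<and> d \<notin> Y \<and> (\<forall>x<d. x \<in> X \<longleftrightarrow> x \<in> Y))"

lemma set_lex_less_insert_left:
  assumes "\<forall>x \<in> X \<union> Y. x < a"
  shows "set_lex_less (insert a X) Y \<longleftrightarrow> X = Y \<or> set_lex_less X Y"
proof
  assume "set_lex_less (insert a X) Y"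
  then obtain d where d: "d \<in> insert a X" "d \<notin> Y" "\<forall>x<d. x \<in> insert a X \<longleftrightarrow> x \<in> Y"
    unfolding set_lex_less_def by blast
  show "X = Y \<or> set_lex_less X Y"
  proof (cases "d = a")
    case True
    then show ?thesis using d assms by auto
  next
    case False
    then have "d < a" using d(1) assms by auto
    then have "set_lex_less X Y"
      unfolding set_lex_less_def using d False by (intro exI[of _ d]) auto
    then show ?thesis ..
  qed
next
  assume "X = Y \<or> set_lex_less X Y"
  then show "set_lex_less (insert a X) Y"
    using assms unfolding set_lex_less_def by (fastforce dest: order.strict_trans)
qed

lemma set_lex_less_insert_right:
  assumes "\<forall>x \<in> X \<union> Y. x < a"
  shows "set_lex_less X (insert a Y) \<longleftrightarrow> X \<noteq> Y \<and> set_lex_less X Y"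
  using assms unfolding set_lex_less_def
  by (auto; metis Un_iff order.strict_trans)

lemma set_lex_less_insert_both:
  assumes "\<forall>x \<in> X \<union> Y. x < a"
  shows "set_lex_less (insert a X) (insert a Y) \<longleftrightarrow> set_lex_less X Y"
  using assms unfolding set_lex_less_def by auto

lemma set_lex_less_initial_segment:
  fixes X :: "'a::wellorder set"
  shows "X = {x \<in> X. x \<le> d} \<or> set_lex_less X {x \<in> X. x \<le> d}"
proof (cases "X - {x \<in> X. x \<le> d} = {}")
  case False
  define e where "e = (LEAST e. e \<in> X \<and> \<not> e \<le> d)"
  have e: "e \<in> X" "\<not> e \<le> d" using False LeastI_ex[of "\<lambda>e. e \<in> X \<and> \<not> e \<le> d"]
    unfolding e_def by auto
  have "\<forall>x<e. x \<in> X \<longrightarrow> x \<le> d" using not_less_Least unfolding e_def by blast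
  then have "set_lex_less X {x \<in> X. x \<le> d}"
    unfolding set_lex_less_def using e by (intro exI[of _ e]) auto
  then show ?thesis ..
qed auto

lemma set_lex_less_interpolant_below:
  fixes X Y :: "'a::wellorder set"
  assumes "set_lex_less X Y" "Y \<subseteq> {..<\<delta>}" "X \<inter> {..<\<delta>} \<subseteq> {..<\<beta>}"
  shows "\<exists>Z \<subseteq> X \<union> Y. Z \<subseteq> {..<\<beta>} \<and> (X = Z \<or> set_lex_less X Z) \<and> (Z = Y \<or> set_lex_less Z Y)"
proof -
  obtain d where d: "d \<in> X" "d \<notin> Y" "\<forall>x<d. x \<in> X \<longleftrightarrow> x \<in> Y"
    using assms(1) unfolding set_lex_less_def by blast
  show ?thesis
  proof (cases "d < \<delta>")
    case True
    let ?Z = "{x \<in> X. x \<le> d}"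
    have "d < \<beta>" using True d(1) assms(3) by blast
    then have "?Z \<subseteq> {..<\<beta>}" by auto
    moreover have "set_lex_less ?Z Y"
      unfolding set_lex_less_def using d by (intro exI[of _ d]) auto
    ultimately show ?thesis
      using set_lex_less_initial_segment[of X d] by (intro exI[of _ ?Z]) auto
  next
    case False
    then have "Y \<subseteq> X \<inter> {..<\<delta>}" using d(3) assms(2) by fastforce
    then show ?thesis using assms(1,3) by (intro exI[of _ Y]) auto
  qed
qed

lemma sorted_wrt_less_butlast_last:
  fixes A :: "'a::order list"
  assumes "sorted_wrt (<) A" "A \<noteq> []"
  shows "set A = insert (last A) (set (butlast A))" "\<forall>x \<in> set (butlast A). x < last A"
    "\<forall>x \<in> set A. x \<le> last A" "sorted_wrt (<) (butlast A)"
proof -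
  have A: "A = butlast A @ [last A]" using assms(2) by simp
  show "set A = insert (last A) (set (butlast A))" by (subst A) auto
  show "\<forall>x \<in> set (butlast A). x < last A" "sorted_wrt (<) (butlast A)"
    using assms(1) sorted_wrt_append[of "(<)" "butlast A" "[last A]"] by (simp_all flip: A)
  then show "\<forall>x \<in> set A. x \<le> last A"
    using \<open>set A = insert (last A) (set (butlast A))\<close> by auto
qed

lemma lex0_less_irrefl: "\<not> lex0_less f f"
  unfolding lex0_less_def pair_less_def by auto

text \<open>The pair \<open>(f, A)\<close> stands for \<open>f\<^bsup>a\<^sub>1+1 \<dots> a\<^sub>k+1\<^esup>\<close>; since
  \<open>\<nu>\<^bsup>i+1\<^esup> < \<nu>\<close>, of two elements with the same root the one whose stage set contains the
  least stage where the two sets differ is the smaller one.\<close>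

lemma Iless_iff:
  assumes "sorted_wrt (<) A" "sorted_wrt (<) B"
  shows "Iless (f, A) (g, B) \<longleftrightarrow> lex0_less f g \<or> (f = g \<and> set_lex_less (set A) (set B))"
  using assms
proof (induction "(f, A)" "(g, B)" arbitrary: f A g B rule: Iless.induct)
  case (1 f A g B)
  consider (base) "A = []" "B = []"
    | (left) "A \<noteq> []" "B = [] \<or> last B < last A"
    | (right) "B \<noteq> []" "A = [] \<or> last A < last B"
    | (both) "A \<noteq> []" "B \<noteq> []" "last A = last B"
    using linorder_cases by blast
  then show ?case
  proof cases
    case base
    then show ?thesis by (simp add: Iless.simps set_lex_less_def)
  next
    case left
    note A = sorted_wrt_less_butlast_last[OF "1.prems"(1) left(1)]
    have IH: "Iless (f, butlast A) (g, B) \<longleftrightarrow>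
        lex0_less f g \<or> (f = g \<and> set_lex_less (set (butlast A)) (set B))"
      using "1.hyps"(1) left A(4) "1.prems"(2) by auto
    have "\<forall>x \<in> set (butlast A) \<union> set B. x < last A"
      using A(2) left(2) sorted_wrt_less_butlast_last[OF "1.prems"(2)] by force
    then have "set_lex_less (set A) (set B) \<longleftrightarrow>
        set (butlast A) = set B \<or> set_lex_less (set (butlast A)) (set B)"
      using A(1) set_lex_less_insert_left by metis
    moreover have "butlast A = B \<longleftrightarrow> set (butlast A) = set B"
      using strict_sorted_equal[OF A(4) "1.prems"(2)] by blast
    moreover have "Iless (f, A) (g, B) \<longleftrightarrow> (f, butlast A) = (g, B) \<or> Iless (f, butlast A) (g, B)"
      using left by (subst Iless.simps) auto
    ultimately show ?thesis using IH by auto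
  next
    case right
    note B = sorted_wrt_less_butlast_last[OF "1.prems"(2) right(1)]
    have IH: "Iless (f, A) (g, butlast B) \<longleftrightarrow>
        lex0_less f g \<or> (f = g \<and> set_lex_less (set A) (set (butlast B)))"
      using "1.hyps"(2) right B(4) "1.prems"(1) by (auto simp: not_less_iff_gr_or_eq)
    have "\<forall>x \<in> set A \<union> set (butlast B). x < last B"
      using B(2) right(2) sorted_wrt_less_butlast_last[OF "1.prems"(1)] by force
    then have "set_lex_less (set A) (set B) \<longleftrightarrow>
        set A \<noteq> set (butlast B) \<and> set_lex_less (set A) (set (butlast B))"
      using B(1) set_lex_less_insert_right by metis
    moreover have "A = butlast B \<longleftrightarrow> set A = set (butlast B)"
      using strict_sorted_equal[OF "1.prems"(1) B(4)] by blast
    moreover have "Iless (f, A) (g, B) \<longleftrightarrow> (f, A) \<noteq> (g, butlast B) \<and> Iless (f, A) (g, butlast B)"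
      using right by (subst Iless.simps) auto
    ultimately show ?thesis using IH lex0_less_irrefl by auto
  next
    case both
    note A = sorted_wrt_less_butlast_last[OF "1.prems"(1) both(1)]
    note B = sorted_wrt_less_butlast_last[OF "1.prems"(2) both(2)]
    have IH: "Iless (f, butlast A) (g, butlast B) \<longleftrightarrow>
        lex0_less f g \<or> (f = g \<and> set_lex_less (set (butlast A)) (set (butlast B)))"
      using "1.hyps"(3) both A(4) B(4) by auto
    have "\<forall>x \<in> set (butlast A) \<union> set (butlast B). x < last A"
      using A(2) B(2) both(3) by auto
    then have "set_lex_less (set A) (set B) \<longleftrightarrow> set_lex_less (set (butlast A)) (set (butlast B))"
      using A(1) B(1) both(3) set_lex_less_insert_both by metis
    moreover have "Iless (f, A) (g, B) \<longleftrightarrow> Iless (f, butlast A) (g, butlast B)"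
      using both by (subst Iless.simps) auto
    ultimately show ?thesis using IH by auto
  qed
qed

lemma kzero_le: "kzero \<le> (x::'k::wellorder)"
  unfolding kzero_def by (rule Least_le) simp

lemma lex0_less_dense:
  assumes "lex0_less f g"
  shows "\<exists>h \<in> I0. lex0_less f h \<and> lex0_less h g \<and>
    (\<forall>m. fst (h m) \<in> {kzero, fst (f m)} \<and> fst (h m) \<le> fst (g m))"
proof -
  \<comment> \<open>\<open>h\<close> follows \<open>f\<close> up to the first difference \<open>n\<close>, moves only the rational coordinate
     there and is zero afterwards, so it uses no ordinal that does not occur in \<open>f\<close>.\<close>
  obtain n where n: "\<forall>m<n. f m = g m" "pair_less (f n) (g n)"
    using assms unfolding lex0_less_def by blast
  define q where "q = (if fst (f n) < fst (g n) then snd (f n) + 1 else (snd (f n) + snd (g n)) / 2)"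
  define h where "h m = (if m < n then f m else if m = n then (fst (f n), q) else (kzero, 0))" for m
  have "pair_less (f n) (h n)" "pair_less (h n) (g n)"
    using n(2) unfolding h_def q_def pair_less_def by (auto simp: field_simps)
  then have "lex0_less f h" "lex0_less h g"
    unfolding lex0_less_def using n(1) by (auto intro!: exI[of _ n] simp: h_def)
  moreover have "h \<in> I0"
    unfolding I0_def mem_Collect_eq by (rule finite_subset[of _ "{..n}"]) (auto simp: h_def)
  moreover have "fst (h m) \<in> {kzero, fst (f m)} \<and> fst (h m) \<le> fst (g m)" for m
    using n unfolding h_def pair_less_def by (auto simp: kzero_le less_imp_le)
  ultimately show ?thesis by blast
qed

fun support :: "'k::wellorder elt \<Rightarrow> 'k set" where
  "support (f, A) = range (\<lambda>n. fst (f n)) \<union> set A"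

lemma Ialpha_iff_support: "\<sigma> \<in> Ialpha \<alpha> \<longleftrightarrow> \<sigma> \<in> Iset \<and> support \<sigma> \<subseteq> {..<\<alpha>}"
  by (cases \<sigma>) (auto simp: Ialpha_def)

lemma finite_support:
  assumes "\<sigma> \<in> Iset"
  shows "finite (support \<sigma>)"
proof (cases \<sigma>)
  case (Pair f A)
  then have "finite {n. fst (f n) \<noteq> kzero}" using assms by (simp add: Iset_def I0_def)
  moreover have "range (\<lambda>n. fst (f n)) \<subseteq> insert kzero ((\<lambda>n. fst (f n)) ` {n. fst (f n) \<noteq> kzero})"
    by auto
  ultimately show ?thesis using Pair by (auto intro: finite_subset)
qed

lemma kzero_in_support:
  assumes "\<sigma> \<in> Iset"
  shows "kzero \<in> support \<sigma>"
proof (cases \<sigma>)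
  case (Pair f A)
  then have "finite {n. fst (f n) \<noteq> kzero}" using assms by (simp add: Iset_def I0_def)
  then obtain n where "fst (f n) = kzero"
    using infinite_UNIV_nat by (metis (mono_tags) mem_Collect_eq subsetI finite_subset)
  then have "kzero \<in> range (\<lambda>n. fst (f n))" by (metis rangeI)
  then show ?thesis using Pair by simp
qed

lemma is_limit_bound_finite:
  assumes "is_limit \<delta>" "finite S" "S \<subseteq> {..<\<delta>}"
  shows "\<exists>\<beta><\<delta>. S \<subseteq> {..<\<beta>}"
proof (cases "S = {}")
  case True
  have "kzero < \<delta>" using assms(1) kzero_le[of \<delta>] unfolding is_limit_def by auto
  then show ?thesis using True by blast
next
  case False
  then have "Max S < \<delta>" using assms(2,3) by auto
  then obtain \<beta> where "Max S < \<beta>" "\<beta> < \<delta>" using assms(1) unfolding is_limit_def by blast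
  then show ?thesis using assms(2) by (meson Max_ge le_less_trans lessThan_iff subsetI)
qed

lemma Iless_interpolant_in_Ialpha:
  assumes "\<nu> \<in> Iset" "\<sigma> \<in> Ialpha \<delta>" "Iless \<nu> \<sigma>"
    and "support \<nu> \<inter> {..<\<delta>} \<subseteq> {..<\<beta>}"
  shows "\<exists>\<sigma>' \<in> Ialpha \<beta>. (\<sigma>' = \<sigma> \<or> Iless \<sigma>' \<sigma>) \<and> (\<nu> = \<sigma>' \<or> Iless \<nu> \<sigma>')"
proof -
  obtain f A g B where \<nu>: "\<nu> = (f, A)" and \<sigma>: "\<sigma> = (g, B)" by (cases \<nu>, cases \<sigma>)
  have A: "sorted_wrt (<) A" and B: "sorted_wrt (<) B" and "f \<in> I0"
    using assms(1,2) \<nu> \<sigma> by (auto simp: Ialpha_def Iset_def)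
  have \<sigma>_below: "range (\<lambda>n. fst (g n)) \<union> set B \<subseteq> {..<\<delta>}"
    using assms(2) \<sigma> by (simp add: Ialpha_iff_support)
  have \<nu>_below: "range (\<lambda>n. fst (f n)) \<inter> {..<\<delta>} \<subseteq> {..<\<beta>}" "set A \<inter> {..<\<delta>} \<subseteq> {..<\<beta>}"
    using assms(4) \<nu> by auto
  consider "lex0_less f g" | "f = g" "set_lex_less (set A) (set B)"
    using assms(3) Iless_iff[OF A B] \<nu> \<sigma> by auto
  then show ?thesis
  proof cases
    case 1
    then obtain h where h: "h \<in> I0" "lex0_less f h" "lex0_less h g"
      and h_coords: "\<forall>m. fst (h m) \<in> {kzero, fst (f m)} \<and> fst (h m) \<le> fst (g m)"
      using lex0_less_dense by blast
    have "fst (h m) \<in> support \<nu>" for m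
    proof -
      have "{kzero, fst (f m)} \<subseteq> support \<nu>" using kzero_in_support[OF assms(1)] \<nu> by auto
      then show ?thesis using h_coords by blast
    qed
    moreover have "fst (h m) < \<delta>" for m
      using h_coords \<sigma>_below by (meson le_less_trans lessThan_iff rangeI subsetD UnI1)
    ultimately have "range (\<lambda>n. fst (h n)) \<subseteq> {..<\<beta>}"
      using assms(4) by blast
    then have "(h, []) \<in> Ialpha \<beta>"
      using h(1) by (simp add: Ialpha_iff_support Iset_def)
    moreover have "Iless (h, []) (g, B)" "Iless (f, A) (h, [])"
      using h(2,3) Iless_iff[OF _ B, of "[]"] Iless_iff[OF A, of "[]"] by simp_all
    ultimately show ?thesis using \<nu> \<sigma> by blast
  next
    case 2
    have "set B \<subseteq> {..<\<delta>}" using \<sigma>_below by blast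
    from set_lex_less_interpolant_below[OF 2(2) this \<nu>_below(2)]
    obtain Z where Z: "Z \<subseteq> set A \<union> set B" "Z \<subseteq> {..<\<beta>}"
      and A_Z: "set A = Z \<or> set_lex_less (set A) Z" and Z_B: "Z = set B \<or> set_lex_less Z (set B)"
      by blast
    define C where "C = sorted_list_of_set Z"
    have "finite Z" using Z(1) finite_subset by blast
    then have C: "sorted_wrt (<) C" "set C = Z" by (simp_all add: C_def)
    have "range (\<lambda>n. fst (f n)) \<subseteq> {..<\<beta>}"
      using 2(1) \<sigma>_below \<nu>_below(1) by blast
    then have "(f, C) \<in> Ialpha \<beta>"
      using \<open>f \<in> I0\<close> C Z(2) by (simp add: Ialpha_iff_support Iset_def)
    moreover have "(f, A) = (f, C) \<or> Iless (f, A) (f, C)"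
      using A_Z Iless_iff[OF A C(1)] strict_sorted_equal[OF A C(1)] C(2) by auto
    moreover have "(f, C) = (g, B) \<or> Iless (f, C) (g, B)"
      using Z_B Iless_iff[OF C(1) B] strict_sorted_equal[OF C(1) B] C(2) 2(1) by auto
    ultimately show ?thesis using \<nu> \<sigma> by blast
  qed
qed

theorem mainTheorem12:
  fixes \<delta> :: "'k::wellorder" and \<nu> :: "'k elt"
  assumes "card_order (kord :: ('k \<times> 'k) set)"
    and "regularCard (kord :: ('k \<times> 'k) set)"
    and "(card_of (UNIV :: nat set), card_of (UNIV :: 'k set)) \<in> ordLess"
    and "\<forall>g::'k. (card_of (Func {x. x < g} (UNIV :: 'k set)), card_of (UNIV :: 'k set)) \<in> ordLeq"
    and "\<forall>g::'k. (card_of (Func (UNIV :: nat set) {x. x < g}), card_of (UNIV :: 'k set)) \<in> ordLess"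
    and "is_limit \<delta>"
    and "\<nu> \<in> Iset"
  shows "\<exists>\<beta><\<delta>. \<forall>\<sigma>\<in>Ialpha \<delta>. Iless \<nu> \<sigma> \<longrightarrow>
           (\<exists>\<sigma>'\<in>Ialpha \<beta>. (\<sigma>' = \<sigma> \<or> Iless \<sigma>' \<sigma>) \<and> (\<nu> = \<sigma>' \<or> Iless \<nu> \<sigma>'))"
proof -
  obtain \<beta> where "\<beta> < \<delta>" "support \<nu> \<inter> {..<\<delta>} \<subseteq> {..<\<beta>}"
    using is_limit_bound_finite[OF assms(6)] finite_support[OF assms(7)] by blast
  then show ?thesis
    using Iless_interpolant_in_Ialpha[OF assms(7)] by blast
qed

end
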